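(* Let $A$ be a Keigher ring and $X=\operatorname{Spec}^\Delta A$. Let $\varphi(X)\colon\mathcal O(X)\to\mathcal O'(X)$ be the homomorphism $\varphi(X)(f)(\mathfrak p)=f(\mathfrak p)\bmod \mathfrak pA_{\mathfrak p}$ (the image of $f(\mathfrak p)\in A_{\mathfrak p}$ in the residue field $A_{\mathfrak p}/\mathfrak pA_{\mathfrak p}=K(\mathfrak p)$). Then $\ker\varphi(X)$ equals the nilradical of $\mathcal O(X)$.
   Context: All rings are commutative with unit. A differential ring is a ring with finitely many pairwise commuting derivations. A Keigher ring is a differential ring in which the radical $\{x: x^n\in\mathfrak a\text{ for some }n\}$ of every differential ideal $\mathfrak a$ is again a differential ideal. $X=\operatorname{Spec}^\Delta A$ is the set of prime ideals of $A$ closed under all derivations, with the Kolchin topology (closed sets $V(E)=\{\mathfrak p: E\subseteq\mathfrak p\}$). For $\mathfrak p\in X$, $A_{\mathfrak p}$ is the localization at $A\setminus\mathfrak p$ and $K(\mathfrak p)$ is the fraction field of $A/\mathfrak p$. Structure sheaf: for open $U\subseteq X$, $\mathcal O(U)$ is the set of functions $f$ on $U$ with $f(\mathfrak p)\in A_{\mathfrak p}$ that are regular at every point of $U$, where $f$ is regular at $\mathfrak p$ if there exist an open neighborhood $W\subseteq U$ of $\mathfrak p$ and $a,b\in A$ with $b\notin\mathfrak q$ and $f(\mathfrak q)=a/b$ in $A_{\mathfrak q}$ for all $\mathfrak q\in W$; it is a differential ring with pointwise operations and derivations. Analogously, $\mathcal O'(U)$ is the set of functions $f$ on $U$ with $f(\mathfrak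 p)\in K(\mathfrak p)$ that are regular at every point of $U$, where regularity means locally $f(\mathfrak q)=a/b$ in $K(\mathfrak q)$ with $b\notin\mathfrak q$. *)

theory Defs
  imports Main
begin

definition is_derivation :: "('a::comm_ring_1 \<Rightarrow> 'a) \<Rightarrow> bool" where
  "is_derivation d \<longleftrightarrow>
     (\<forall>x y. d (x + y) = d x + d y) \<and> (\<forall>x y. d (x * y) = x * d y + d x * y)"

definition differential_ring :: "('a::comm_ring_1 \<Rightarrow> 'a) set \<Rightarrow> bool" where
  "differential_ring \<Delta> \<longleftrightarrow> finite \<Delta> \<and> (\<forall>d\<in>\<Delta>. is_derivation d)
      \<and> (\<forall>d\<in>\<Delta>. \<forall>e\<in>\<Delta>. d \<circ> e = e \<circ> d)"

definition is_ideal :: "'a::comm_ring_1 set \<Rightarrow> bool" where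
  "is_ideal I \<longleftrightarrow> 0 \<in> I \<and> (\<forall>x\<in>I. \<forall>y\<in>I. x + y \<in> I) \<and> (\<forall>x\<in>I. - x \<in> I)
      \<and> (\<forall>r x. x \<in> I \<longrightarrow> r * x \<in> I)"

definition is_prime_ideal :: "'a::comm_ring_1 set \<Rightarrow> bool" where
  "is_prime_ideal P \<longleftrightarrow> is_ideal P \<and> 1 \<notin> P \<and> (\<forall>x y. x * y \<in> P \<longrightarrow> x \<in> P \<or> y \<in> P)"

definition differential_ideal :: "('a::comm_ring_1 \<Rightarrow> 'a) set \<Rightarrow> 'a set \<Rightarrow> bool" where
  "differential_ideal \<Delta> I \<longleftrightarrow> is_ideal I \<and> (\<forall>d\<in>\<Delta>. \<forall>x\<in>I. d x \<in> I)"

definition radical :: "'a::comm_ring_1 set \<Rightarrow> 'a set" where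
  "radical I = {x. \<exists>n. x ^ n \<in> I}"

definition keigher_ring :: "('a::comm_ring_1 \<Rightarrow> 'a) set \<Rightarrow> bool" where
  "keigher_ring \<Delta> \<longleftrightarrow> differential_ring \<Delta> \<and>
     (\<forall>I. differential_ideal \<Delta> I \<longrightarrow> differential_ideal \<Delta> (radical I))"

text \<open>Differential spectrum and Kolchin topology (open sets = complements of V(E)).\<close>

definition dspec :: "('a::comm_ring_1 \<Rightarrow> 'a) set \<Rightarrow> 'a set set" where
  "dspec \<Delta> = {P. is_prime_ideal P \<and> (\<forall>d\<in>\<Delta>. \<forall>x\<in>P. d x \<in> P)}"

definition kolchin_open :: "('a::comm_ring_1 \<Rightarrow> 'a) set \<Rightarrow> 'a set set \<Rightarrow> bool" where
  "kolchin_open \<Delta> W \<longleftrightarrow> (\<exists>E. W = {Q \<in> dspec \<Delta>. \<not> E \<subseteq> Q})"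

text \<open>The element a/s of A_p (s not in p): the class of (a,s) under
  (a,s) ~ (b,t) iff u(at - bs) = 0 for some u not in p.\<close>
definition lfrac :: "'a::comm_ring_1 set \<Rightarrow> 'a \<Rightarrow> 'a \<Rightarrow> ('a \<times> 'a) set" where
  "lfrac P a s = {(b, t). t \<notin> P \<and> (\<exists>u. u \<notin> P \<and> u * (a * t - b * s) = 0)}"

definition loc :: "'a::comm_ring_1 set \<Rightarrow> ('a \<times> 'a) set set" where
  "loc P = {lfrac P a s | a s. s \<notin> P}"

definition loc_mult :: "'a::comm_ring_1 set \<Rightarrow> ('a \<times> 'a) set \<Rightarrow> ('a \<times> 'a) set \<Rightarrow> ('a \<times> 'a) set" where
  "loc_mult P c d = {(x, w). w \<notin> P \<and> (\<exists>a s b t. (a, s) \<in> c \<and> (b, t) \<in> d \<and>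
       (\<exists>u. u \<notin> P \<and> u * (x * (s * t) - (a * b) * w) = 0))}"

fun loc_pow :: "'a::comm_ring_1 set \<Rightarrow> ('a \<times> 'a) set \<Rightarrow> nat \<Rightarrow> ('a \<times> 'a) set" where
  "loc_pow P c 0 = lfrac P 1 1"
| "loc_pow P c (Suc n) = loc_mult P c (loc_pow P c n)"

text \<open>The element a/s of K(p) = Frac(A/p): the class of (a,s) under (a,s) ~ (b,t) iff at - bs in p.\<close>
definition kfrac :: "'a::comm_ring_1 set \<Rightarrow> 'a \<Rightarrow> 'a \<Rightarrow> ('a \<times> 'a) set" where
  "kfrac P a s = {(b, t). t \<notin> P \<and> a * t - b * s \<in> P}"

text \<open>Residue map A_p \<rightarrow> A_p / pA_p = K(p), a/s \<mapsto> a/s.\<close>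
definition residue :: "'a::comm_ring_1 set \<Rightarrow> ('a \<times> 'a) set \<Rightarrow> ('a \<times> 'a) set" where
  "residue P c = {(b, t). t \<notin> P \<and> (\<exists>a s. (a, s) \<in> c \<and> a * t - b * s \<in> P)}"

definition regular_at ::
  "('a::comm_ring_1 \<Rightarrow> 'a) set \<Rightarrow> 'a set set \<Rightarrow> ('a set \<Rightarrow> ('a \<times> 'a) set) \<Rightarrow> 'a set \<Rightarrow> bool" where
  "regular_at \<Delta> U f P \<longleftrightarrow> (\<exists>W a b. kolchin_open \<Delta> W \<and> P \<in> W \<and> W \<subseteq> U \<and>
      (\<forall>Q\<in>W. b \<notin> Q \<and> f Q = lfrac Q a b))"

text \<open>O(U): functions on U (extended by the empty set outside U) with f(p) in A_p, regular everywhere.\<close>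
definition sheafO ::
  "('a::comm_ring_1 \<Rightarrow> 'a) set \<Rightarrow> 'a set set \<Rightarrow> ('a set \<Rightarrow> ('a \<times> 'a) set) set" where
  "sheafO \<Delta> U = {f. (\<forall>P\<in>U. f P \<in> loc P \<and> regular_at \<Delta> U f P) \<and> (\<forall>P. P \<notin> U \<longrightarrow> f P = {})}"

definition phi :: "'a::comm_ring_1 set set \<Rightarrow> ('a set \<Rightarrow> ('a \<times> 'a) set) \<Rightarrow> 'a set \<Rightarrow> ('a \<times> 'a) set" where
  "phi U f = (\<lambda>P. if P \<in> U then residue P (f P) else {})"

text \<open>Nilradical of O(U): ring operations on O(U) are pointwise, so f^n = 0 in O(U)
  means f(p)^n = 0 in A_p for all p in U.\<close>
definition nilradicalO ::
  "('a::comm_ring_1 \<Rightarrow> 'a) set \<Rightarrow> 'a set set \<Rightarrow> ('a set \<Rightarrow> ('a \<times> 'a) set) set" where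
  "nilradicalO \<Delta> U = {f \<in> sheafO \<Delta> U. \<exists>n. \<forall>P\<in>U. loc_pow P (f P) n = lfrac P 0 1}"

definition kernel_phi ::
  "('a::comm_ring_1 \<Rightarrow> 'a) set \<Rightarrow> 'a set set \<Rightarrow> ('a set \<Rightarrow> ('a \<times> 'a) set) set" where
  "kernel_phi \<Delta> U = {f \<in> sheafO \<Delta> U. \<forall>P\<in>U. phi U f P = kfrac P 0 1}"

end

theory Submission imports Defs begin

(* An element f of O(X) lies in ker phi iff near every point it is a fraction a/b whose
   numerator a lies in all nearby differential primes; it is nilpotent iff some power of f
   vanishes at every stalk.

   1. Elementary facts on ideals and on fractions in A_p: multiplication and powers of
      fractions, when a/s is zero in A_p, and when its residue in K(p) is zero.
   2. Differential ideal theory of a Keigher ring: by Zorn, a differential ideal J avoiding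
      the powers of x is contained in a maximal such ideal, which is prime since radicals
      and colon ideals of radical differential ideals are differential.  Consequences:
      an element lying in all differential primes is nilpotent, and Spec^Delta A is
      quasi-compact (a family of elements not all in any differential prime has a finite
      subfamily with the same property).
   3. nil(O(X)) is in ker phi: if (a/s)^n = 0 in A_p then a^n, hence a, lies in p.
   4. ker phi is in nil(O(X)): around each p, f = a/b on a basic open D(e) with e*a
      nilpotent; finitely many D(e) cover X, and the sum of the nilpotency exponents kills f. *)

lemma ideal_mult_l: "is_ideal I \<Longrightarrow> x \<in> I \<Longrightarrow> r * x \<in> I"
  by (simp add: is_ideal_def)

lemma ideal_mult_r: "is_ideal I \<Longrightarrow> x \<in> I \<Longrightarrow> x * r \<in> I"
  by (metis ideal_mult_l mult.commute)

lemma ideal_uminus_iff: "is_ideal I \<Longrightarrow> - x \<in> I \<longleftrightarrow> x \<in> I"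
  unfolding is_ideal_def by (metis minus_minus)

lemma ideal_diff: "is_ideal I \<Longrightarrow> x \<in> I \<Longrightarrow> y \<in> I \<Longrightarrow> x - y \<in> I"
  unfolding is_ideal_def by (metis diff_conv_add_uminus)

lemma prime_ideal_is_ideal: "is_prime_ideal P \<Longrightarrow> is_ideal P"
  by (simp add: is_prime_ideal_def)

lemma prime_one: "is_prime_ideal P \<Longrightarrow> 1 \<notin> P"
  by (simp add: is_prime_ideal_def)

lemma prime_mult_in: "is_prime_ideal P \<Longrightarrow> x * y \<in> P \<Longrightarrow> x \<in> P \<or> y \<in> P"
  by (simp add: is_prime_ideal_def)

lemma prime_notin_mult: "is_prime_ideal P \<Longrightarrow> s \<notin> P \<Longrightarrow> t \<notin> P \<Longrightarrow> s * t \<notin> P"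
  using prime_mult_in by blast

lemma prime_notin_pow: "is_prime_ideal P \<Longrightarrow> s \<notin> P \<Longrightarrow> s ^ n \<notin> P"
  by (induction n) (auto simp: prime_one prime_notin_mult)

lemma dspec_prime: "Q \<in> dspec \<Delta> \<Longrightarrow> is_prime_ideal Q"
  by (simp add: dspec_def)

lemma dspec_differential_ideal: "Q \<in> dspec \<Delta> \<Longrightarrow> differential_ideal \<Delta> Q"
  by (simp add: dspec_def differential_ideal_def is_prime_ideal_def)

section \<open>Fractions in the localization A_p and the residue field K(p)\<close>

lemma lfrac_self: "is_prime_ideal P \<Longrightarrow> s \<notin> P \<Longrightarrow> (a, s) \<in> lfrac P a s"
  unfolding lfrac_def using prime_one by fastforce

lemma loc_mult_lfrac:
  assumes P: "is_prime_ideal P" and s: "s \<notin> P" and t: "t \<notin> P"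
  shows "loc_mult P (lfrac P a s) (lfrac P b t) = lfrac P (a * b) (s * t)"
proof (rule set_eqI, clarify)
  fix x w
  show "(x, w) \<in> loc_mult P (lfrac P a s) (lfrac P b t) \<longleftrightarrow> (x, w) \<in> lfrac P (a * b) (s * t)"
  proof
    assume "(x, w) \<in> loc_mult P (lfrac P a s) (lfrac P b t)"
    then obtain a' s' b' t' u where w: "w \<notin> P" and u: "u \<notin> P"
      and h1: "(a', s') \<in> lfrac P a s" and h2: "(b', t') \<in> lfrac P b t"
      and e3: "u * (x * (s' * t') - (a' * b') * w) = 0"
      unfolding loc_mult_def by blast
    from h1 obtain v where s': "s' \<notin> P" and v: "v \<notin> P" and e1: "v * (a * s' - a' * s) = 0"
      unfolding lfrac_def by blast
    from h2 obtain v' where t': "t' \<notin> P" and v': "v' \<notin> P" and e2: "v' * (b * t' - b' * t) = 0"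
      unfolding lfrac_def by blast
    have E1: "v * a * s' = v * a' * s" and E2: "v' * b * t' = v' * b' * t"
      and E3: "u * x * s' * t' = u * a' * b' * w"
      using e1 e2 e3 by (simp_all add: algebra_simps)
    have "u * v * v' * s' * t' * a * b * w = u * w * (v * a * s') * (v' * b * t')"
      by (simp add: algebra_simps)
    also have "\<dots> = u * w * (v * a' * s) * (v' * b' * t)" using E1 E2 by simp
    also have "\<dots> = v * v' * s * t * (u * a' * b' * w)" by (simp add: algebra_simps)
    also have "\<dots> = v * v' * s * t * (u * x * s' * t')" using E3 by simp
    finally have "(u * v * v' * s' * t') * (a * b * w - x * (s * t)) = 0"
      by (simp add: algebra_simps)
    moreover have "u * v * v' * s' * t' \<notin> P"
      using P u v v' s' t' by (simp add: prime_notin_mult)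
    ultimately show "(x, w) \<in> lfrac P (a * b) (s * t)"
      unfolding lfrac_def using w by blast
  next
    assume "(x, w) \<in> lfrac P (a * b) (s * t)"
    then obtain u where w: "w \<notin> P" and u: "u \<notin> P" and e: "u * (a * b * w - x * (s * t)) = 0"
      unfolding lfrac_def by blast
    have "u * (x * (s * t) - (a * b) * w) = 0" using e by (simp add: algebra_simps)
    then show "(x, w) \<in> loc_mult P (lfrac P a s) (lfrac P b t)"
      unfolding loc_mult_def using w u lfrac_self[OF P s, of a] lfrac_self[OF P t, of b] by blast
  qed
qed

lemma loc_pow_lfrac:
  assumes "is_prime_ideal P" and "s \<notin> P"
  shows "loc_pow P (lfrac P a s) n = lfrac P (a ^ n) (s ^ n)"
  by (induction n) (simp_all add: loc_mult_lfrac assms prime_notin_pow)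

lemma lfrac_eq_zero_iff:
  assumes P: "is_prime_ideal P" and s: "s \<notin> P"
  shows "lfrac P c s = lfrac P 0 1 \<longleftrightarrow> (\<exists>e. e \<notin> P \<and> e * c = 0)"
proof
  assume "lfrac P c s = lfrac P 0 1"
  then have "(0, 1) \<in> lfrac P c s" using lfrac_self[OF P prime_one[OF P]] by simp
  then show "\<exists>e. e \<notin> P \<and> e * c = 0" unfolding lfrac_def by auto
next
  assume "\<exists>e. e \<notin> P \<and> e * c = 0"
  then obtain e where e: "e \<notin> P" and ec: "e * c = 0" by blast
  show "lfrac P c s = lfrac P 0 1"
  proof (rule set_eqI, clarify)
    fix x w
    have "(e * u * s) * (0 * w - x * 1) = e * (u * (c * w - x * s)) - (e * c) * (u * w)"
      and "(e * u) * (c * w - x * s) = (e * c) * (u * w) + e * s * (u * (0 * w - x * 1))" for u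
      by (simp_all add: algebra_simps)
    then have "u * (c * w - x * s) = 0 \<Longrightarrow> (e * u * s) * (0 * w - x * 1) = 0"
      and "u * (0 * w - x * 1) = 0 \<Longrightarrow> (e * u) * (c * w - x * s) = 0" for u
      using ec by simp_all
    moreover have "u \<notin> P \<Longrightarrow> e * u * s \<notin> P" and "u \<notin> P \<Longrightarrow> e * u \<notin> P" for u
      using P e s by (simp_all add: prime_notin_mult)
    ultimately show "(x, w) \<in> lfrac P c s \<longleftrightarrow> (x, w) \<in> lfrac P 0 1"
      unfolding lfrac_def by blast
  qed
qed

lemma residue_lfrac_zero_iff:
  assumes P: "is_prime_ideal P" and s: "s \<notin> P"
  shows "residue P (lfrac P a s) = kfrac P 0 1 \<longleftrightarrow> a \<in> P"
proof
  have I: "is_ideal P" using P by (rule prime_ideal_is_ideal)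
  assume "residue P (lfrac P a s) = kfrac P 0 1"
  moreover have "(a, s) \<in> residue P (lfrac P a s)"
    unfolding residue_def using s lfrac_self[OF P s] is_ideal_def[of P] I by fastforce
  ultimately have "- a \<in> P" unfolding kfrac_def by simp
  then show "a \<in> P" using ideal_uminus_iff[OF I] by blast
next
  have I: "is_ideal P" using P by (rule prime_ideal_is_ideal)
  assume a: "a \<in> P"
  show "residue P (lfrac P a s) = kfrac P 0 1"
  proof (rule set_eqI, clarify)
    fix b t
    show "(b, t) \<in> residue P (lfrac P a s) \<longleftrightarrow> (b, t) \<in> kfrac P 0 1"
    proof
      assume "(b, t) \<in> residue P (lfrac P a s)"
      then obtain a' s' where t: "t \<notin> P" and m: "(a', s') \<in> lfrac P a s"
        and h: "a' * t - b * s' \<in> P"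
        unfolding residue_def by blast
      from m obtain v where s': "s' \<notin> P" and v: "v \<notin> P" and e: "v * (a * s' - a' * s) = 0"
        unfolding lfrac_def by blast
      have "(v * s) * a' = v * a * s'" using e by (simp add: algebra_simps)
      also have "\<dots> \<in> P" using a I by (metis ideal_mult_l ideal_mult_r)
      finally have a': "a' \<in> P"
        using prime_mult_in[OF P] prime_notin_mult[OF P v s] by blast
      have "b * s' = a' * t - (a' * t - b * s')" by simp
      also have "\<dots> \<in> P" using ideal_diff[OF I ideal_mult_r[OF I a'] h] .
      finally have "b \<in> P" using prime_mult_in[OF P] s' by blast
      then show "(b, t) \<in> kfrac P 0 1"
        unfolding kfrac_def using t ideal_uminus_iff[OF I] by simp
    next
      assume "(b, t) \<in> kfrac P 0 1"
      then have t: "t \<notin> P" and "b \<in> P" unfolding kfrac_def using ideal_uminus_iff[OF I] by auto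
      then have "a * t - b * s \<in> P" using a I by (simp add: ideal_diff ideal_mult_r)
      then show "(b, t) \<in> residue P (lfrac P a s)"
        unfolding residue_def using t lfrac_self[OF P s, of a] by blast
    qed
  qed
qed

section \<open>Differential ideals\<close>

lemma deriv_zero: "is_derivation d \<Longrightarrow> d 0 = 0"
  unfolding is_derivation_def by (metis add_cancel_right_right add_0)

lemma zero_differential_ideal: "\<forall>d\<in>\<Delta>. is_derivation d \<Longrightarrow> differential_ideal \<Delta> {0}"
  unfolding differential_ideal_def is_ideal_def by (auto simp: deriv_zero)

lemma directed_union_differential_ideal:
  assumes ideals: "\<And>I. I \<in> C \<Longrightarrow> differential_ideal \<Delta> I" and ne: "C \<noteq> {}"
    and directed: "\<And>I J. I \<in> C \<Longrightarrow> J \<in> C \<Longrightarrow> \<exists>K\<in>C. I \<subseteq> K \<and> J \<subseteq> K"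
  shows "differential_ideal \<Delta> (\<Union>C)"
proof -
  have sum: "x + y \<in> \<Union>C" if "x \<in> \<Union>C" "y \<in> \<Union>C" for x y
  proof -
    from that obtain I J where "I \<in> C" "J \<in> C" "x \<in> I" "y \<in> J" by (auto simp only: Union_iff)
    then obtain K where "K \<in> C" "x \<in> K" "y \<in> K" using directed by blast
    then show ?thesis using ideals[of K] by (auto simp: differential_ideal_def is_ideal_def)
  qed
  show ?thesis
    unfolding differential_ideal_def is_ideal_def
  proof (intro conjI ballI allI impI)
    show "0 \<in> \<Union>C" using ne ideals by (fastforce simp: differential_ideal_def is_ideal_def)
    show "x + y \<in> \<Union>C" if "x \<in> \<Union>C" "y \<in> \<Union>C" for x y using sum that .
    show "- x \<in> \<Union>C" if "x \<in> \<Union>C" for x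
      using that ideals by (fastforce simp: differential_ideal_def is_ideal_def)
    show "r * x \<in> \<Union>C" if "x \<in> \<Union>C" for r x
      using that ideals by (fastforce simp: differential_ideal_def is_ideal_def)
    show "d x \<in> \<Union>C" if "d \<in> \<Delta>" "x \<in> \<Union>C" for d x
      using that ideals by (fastforce simp: differential_ideal_def)
  qed
qed

text \<open>Colon ideals (M : c) of a radical differential ideal M are differential:
  if y c \<in> M then (d y \<cdot> c)^2 \<in> M, using d(y c) \<in> M.\<close>
lemma colon_differential_ideal:
  assumes D: "\<forall>d\<in>\<Delta>. is_derivation d" and M: "differential_ideal \<Delta> M" and R: "radical M = M"
  shows "differential_ideal \<Delta> {y. y * c \<in> M}"
proof -
  have I: "is_ideal M" using M by (simp add: differential_ideal_def)
  have rad: "z * z \<in> M \<Longrightarrow> z \<in> M" for z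
    using R unfolding radical_def by (metis (mono_tags) mem_Collect_eq power2_eq_square)
  have "is_ideal {y. y * c \<in> M}"
    using I unfolding is_ideal_def by (auto simp: distrib_right mult.assoc)
  moreover have "d y * c \<in> M" if d: "d \<in> \<Delta>" and y: "y * c \<in> M" for d y
  proof -
    have "d (y * c) \<in> M" using M d y by (simp add: differential_ideal_def)
    then have dy: "y * d c + d y * c \<in> M" using D d by (simp add: is_derivation_def)
    have "(d y * c) * (d y * c) = (d y * c) * (y * d c + d y * c) - (d y * d c) * (y * c)"
      by (simp add: algebra_simps)
    also have "\<dots> \<in> M" using dy y I by (simp add: ideal_diff ideal_mult_l)
    finally show ?thesis by (rule rad)
  qed
  ultimately show ?thesis unfolding differential_ideal_def by blast
qed

definition avoiding_ideals :: "('a::comm_ring_1 \<Rightarrow> 'a) set \<Rightarrow> 'a set \<Rightarrow> 'a \<Rightarrow> 'a set set" where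
  "avoiding_ideals \<Delta> J x = {I. differential_ideal \<Delta> I \<and> J \<subseteq> I \<and> (\<forall>n. x ^ n \<notin> I)}"

lemma maximal_avoiding_ideal_exists:
  assumes "J \<in> avoiding_ideals \<Delta> J x"
  shows "\<exists>M\<in>avoiding_ideals \<Delta> J x. \<forall>I\<in>avoiding_ideals \<Delta> J x. M \<subseteq> I \<longrightarrow> I = M"
proof (rule subset_Zorn_nonempty)
  show "avoiding_ideals \<Delta> J x \<noteq> {}" using assms by blast
next
  fix C assume ne: "C \<noteq> {}" and chain: "subset.chain (avoiding_ideals \<Delta> J x) C"
  then have mem: "\<And>I. I \<in> C \<Longrightarrow> I \<in> avoiding_ideals \<Delta> J x" by (auto simp: subset.chain_def)
  have "differential_ideal \<Delta> (\<Union>C)"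
  proof (rule directed_union_differential_ideal[OF _ ne])
    show "\<And>I. I \<in> C \<Longrightarrow> differential_ideal \<Delta> I" using mem by (simp add: avoiding_ideals_def)
    show "\<exists>L\<in>C. I \<subseteq> L \<and> K \<subseteq> L" if "I \<in> C" "K \<in> C" for I K
    proof -
      have "I \<subseteq> K \<or> K \<subseteq> I" using chain that by (auto simp: subset.chain_def)
      then show ?thesis using that by blast
    qed
  qed
  then show "\<Union>C \<in> avoiding_ideals \<Delta> J x"
    using ne mem by (auto simp: avoiding_ideals_def)
qed

text \<open>In a Keigher ring a maximal differential ideal avoiding the powers of x is prime:
  it equals its radical, so its colon ideals are differential, and a maximality argument
  on the colon ideals (M : b) and (M : x^i) rules out a b \<in> M with a, b \<notin> M.\<close>
lemma maximal_avoiding_ideal_prime: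
  assumes K: "keigher_ring \<Delta>" and MA: "M \<in> avoiding_ideals \<Delta> J x"
    and max: "\<forall>I\<in>avoiding_ideals \<Delta> J x. M \<subseteq> I \<longrightarrow> I = M"
  shows "is_prime_ideal M"
proof -
  have D: "\<forall>d\<in>\<Delta>. is_derivation d" using K by (simp add: keigher_ring_def differential_ring_def)
  have Md: "differential_ideal \<Delta> M" and JM: "J \<subseteq> M" and xM: "\<And>n. x ^ n \<notin> M"
    using MA unfolding avoiding_ideals_def by auto
  have I: "is_ideal M" using Md by (simp add: differential_ideal_def)
  have M_rad: "M \<subseteq> radical M" unfolding radical_def by (auto intro: exI[of _ 1])
  have "x ^ n \<notin> radical M" for n
    using xM unfolding radical_def by (simp flip: power_mult)
  then have "radical M \<in> avoiding_ideals \<Delta> J x"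
    using K Md JM M_rad unfolding avoiding_ideals_def keigher_ring_def by blast
  then have R: "radical M = M" using max M_rad by blast
  have colon: "{y. y * c \<in> M} = M" if "\<forall>n. x ^ n * c \<notin> M" for c
    using that colon_differential_ideal[OF D Md R, of c] JM I
    by (intro max[rule_format]) (auto simp: avoiding_ideals_def intro: ideal_mult_r)
  have "a \<in> M \<or> b \<in> M" if ab: "a * b \<in> M" for a b
  proof (rule ccontr)
    assume "\<not> (a \<in> M \<or> b \<in> M)"
    then have a: "a \<notin> M" and b: "b \<notin> M" by auto
    obtain i where i: "x ^ i * b \<in> M" using colon[of b] ab a by blast
    obtain j where "x ^ j * x ^ i \<in> M" using colon[of "x ^ i"] i b by (auto simp: mult.commute)
    then show False using xM by (metis power_add)
  qed
  moreover have "1 \<notin> M" using xM[of 0] by simp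
  ultimately show ?thesis unfolding is_prime_ideal_def using I by blast
qed

lemma exists_dprime:
  assumes K: "keigher_ring \<Delta>" and J: "differential_ideal \<Delta> J" and x: "\<forall>n. x ^ n \<notin> J"
  shows "\<exists>Q\<in>dspec \<Delta>. J \<subseteq> Q \<and> x \<notin> Q"
proof -
  have J_avoids: "J \<in> avoiding_ideals \<Delta> J x" using J x by (simp add: avoiding_ideals_def)
  obtain M where MA: "M \<in> avoiding_ideals \<Delta> J x"
    and max: "\<forall>I\<in>avoiding_ideals \<Delta> J x. M \<subseteq> I \<longrightarrow> I = M"
    using maximal_avoiding_ideal_exists[OF J_avoids] by blast
  have "is_prime_ideal M" using maximal_avoiding_ideal_prime[OF K MA max] .
  moreover have "differential_ideal \<Delta> M" "J \<subseteq> M" "x \<notin> M"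
    using MA unfolding avoiding_ideals_def by (auto dest: spec[of _ 1])
  ultimately show ?thesis unfolding dspec_def differential_ideal_def by blast
qed

lemma nilpotent_if_in_all_dprimes:
  assumes K: "keigher_ring \<Delta>" and x: "\<forall>Q\<in>dspec \<Delta>. x \<in> Q"
  shows "\<exists>n. x ^ n = 0"
proof (rule ccontr)
  assume "\<nexists>n. x ^ n = 0"
  moreover have "\<forall>d\<in>\<Delta>. is_derivation d"
    using K by (simp add: keigher_ring_def differential_ring_def)
  ultimately show False
    using exists_dprime[OF K zero_differential_ideal, of x] x by auto
qed

definition differential_hull :: "('a::comm_ring_1 \<Rightarrow> 'a) set \<Rightarrow> 'a set \<Rightarrow> 'a set" where
  "differential_hull \<Delta> E = \<Inter>{I. differential_ideal \<Delta> I \<and> E \<subseteq> I}"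

lemma differential_hull_ideal: "differential_ideal \<Delta> (differential_hull \<Delta> E)"
  unfolding differential_hull_def differential_ideal_def is_ideal_def by auto

lemma differential_hull_least:
  "differential_ideal \<Delta> I \<Longrightarrow> E \<subseteq> I \<Longrightarrow> differential_hull \<Delta> E \<subseteq> I"
  unfolding differential_hull_def by blast

lemma differential_hull_mono: "E \<subseteq> E' \<Longrightarrow> differential_hull \<Delta> E \<subseteq> differential_hull \<Delta> E'"
  unfolding differential_hull_def by blast

text \<open>Every element of a generated differential ideal is already generated by finitely many
  generators, since the hulls of the finite subsets form a directed family.\<close>
lemma differential_hull_finite:
  assumes "y \<in> differential_hull \<Delta> E"
  shows "\<exists>F\<subseteq>E. finite F \<and> y \<in> differential_hull \<Delta> F"
proof -
  define C where "C = {differential_hull \<Delta> F | F. F \<subseteq> E \<and> finite F}"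
  have "differential_ideal \<Delta> (\<Union>C)"
  proof (rule directed_union_differential_ideal)
    show "\<And>I. I \<in> C \<Longrightarrow> differential_ideal \<Delta> I" using differential_hull_ideal C_def by blast
    show "C \<noteq> {}" unfolding C_def by blast
    show "\<exists>L\<in>C. I \<subseteq> L \<and> K \<subseteq> L" if IK: "I \<in> C" "K \<in> C" for I K
    proof -
      obtain F G where "I = differential_hull \<Delta> F" "K = differential_hull \<Delta> G"
        "F \<subseteq> E" "G \<subseteq> E" "finite F" "finite G" using IK unfolding C_def by blast
      then show ?thesis unfolding C_def
        by (intro bexI[of _ "differential_hull \<Delta> (F \<union> G)"])
           (auto intro: differential_hull_mono[THEN subsetD])
    qed
  qed
  moreover have "E \<subseteq> \<Union>C"
  proof
    fix z assume "z \<in> E"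
    then have "differential_hull \<Delta> {z} \<in> C" unfolding C_def by blast
    then show "z \<in> \<Union>C" unfolding differential_hull_def by blast
  qed
  ultimately have "y \<in> \<Union>C" using assms differential_hull_least by blast
  then show ?thesis unfolding C_def by blast
qed

lemma dspec_quasi_compact:
  assumes K: "keigher_ring \<Delta>" and E: "\<forall>Q\<in>dspec \<Delta>. \<not> E \<subseteq> Q"
  shows "\<exists>F\<subseteq>E. finite F \<and> (\<forall>Q\<in>dspec \<Delta>. \<not> F \<subseteq> Q)"
proof -
  have E_hull: "E \<subseteq> differential_hull \<Delta> E" unfolding differential_hull_def by blast
  have one_in_hull: "1 \<in> differential_hull \<Delta> E"
  proof (rule ccontr)
    assume "1 \<notin> differential_hull \<Delta> E"
    then have "\<forall>n. (1::'a) ^ n \<notin> differential_hull \<Delta> E" by simp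
    then obtain Q where "Q \<in> dspec \<Delta>" "differential_hull \<Delta> E \<subseteq> Q"
      using exists_dprime[OF K differential_hull_ideal] by blast
    then show False using E E_hull by blast
  qed
  obtain F where F: "F \<subseteq> E" "finite F" "1 \<in> differential_hull \<Delta> F"
    using differential_hull_finite[OF one_in_hull] by blast
  have "\<not> F \<subseteq> Q" if Q: "Q \<in> dspec \<Delta>" for Q
  proof
    assume "F \<subseteq> Q"
    then have "1 \<in> Q" using F(3) differential_hull_least[OF dspec_differential_ideal[OF Q]] by blast
    then show False using prime_one[OF dspec_prime[OF Q]] by contradiction
  qed
  with F show ?thesis by blast
qed

lemma regular_at_basic_open:
  assumes "regular_at \<Delta> U f P"
  shows "\<exists>e a b. e \<notin> P \<and> (\<forall>Q\<in>dspec \<Delta>. e \<notin> Q \<longrightarrow> Q \<in> U \<and> b \<notin> Q \<and> f Q = lfrac Q a b)"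
proof -
  obtain W a b where W: "kolchin_open \<Delta> W" "P \<in> W" "W \<subseteq> U"
    and fW: "\<forall>Q\<in>W. b \<notin> Q \<and> f Q = lfrac Q a b"
    using assms unfolding regular_at_def by blast
  obtain E where E: "W = {Q \<in> dspec \<Delta>. \<not> E \<subseteq> Q}"
    using W(1) unfolding kolchin_open_def by blast
  obtain e where e: "e \<in> E" "e \<notin> P" using E W(2) by blast
  have "Q \<in> U \<and> b \<notin> Q \<and> f Q = lfrac Q a b" if "Q \<in> dspec \<Delta>" "e \<notin> Q" for Q
  proof -
    have "Q \<in> W" using E that e(1) by blast
    then show ?thesis using W(3) fW by blast
  qed
  then show ?thesis using e(2) by blast
qed

text \<open>A section in ker phi is, near each point, a fraction a/b on some D(e) with e a nilpotent:
  e a lies in every differential prime (either e or the numerator a does).\<close>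
lemma kernel_locally_nilpotent:
  assumes K: "keigher_ring \<Delta>" and f: "f \<in> kernel_phi \<Delta> (dspec \<Delta>)" and P: "P \<in> dspec \<Delta>"
  shows "\<exists>e a b n. e \<notin> P \<and> (e * a) ^ n = 0 \<and>
           (\<forall>Q\<in>dspec \<Delta>. e \<notin> Q \<longrightarrow> b \<notin> Q \<and> f Q = lfrac Q a b)"
proof -
  have "regular_at \<Delta> (dspec \<Delta>) f P" using f P by (simp add: kernel_phi_def sheafO_def)
  from regular_at_basic_open[OF this] obtain e a b where e: "e \<notin> P"
    and fe: "\<forall>Q\<in>dspec \<Delta>. e \<notin> Q \<longrightarrow> Q \<in> dspec \<Delta> \<and> b \<notin> Q \<and> f Q = lfrac Q a b"
    by (elim exE conjE)
  have "e * a \<in> Q" if Q: "Q \<in> dspec \<Delta>" for Q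
  proof (cases "e \<in> Q")
    case False
    then have "residue Q (lfrac Q a b) = kfrac Q 0 1" and "b \<notin> Q"
      using f Q fe by (auto simp: kernel_phi_def phi_def)
    then have "a \<in> Q" using residue_lfrac_zero_iff[OF dspec_prime[OF Q]] by blast
    then show ?thesis using ideal_mult_l[OF prime_ideal_is_ideal[OF dspec_prime[OF Q]]] by blast
  qed (use ideal_mult_r[OF prime_ideal_is_ideal[OF dspec_prime[OF Q]]] in blast)
  then obtain n where "(e * a) ^ n = 0" using nilpotent_if_in_all_dprimes[OF K, of "e * a"] by blast
  with e fe show ?thesis by (intro exI[of _ e] exI[of _ a] exI[of _ b] exI[of _ n]) simp
qed

lemma nilradical_sub_kernel:
  assumes f: "f \<in> nilradicalO \<Delta> (dspec \<Delta>)"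
  shows "f \<in> kernel_phi \<Delta> (dspec \<Delta>)"
proof -
  obtain n where fO: "f \<in> sheafO \<Delta> (dspec \<Delta>)"
    and nil: "\<And>P. P \<in> dspec \<Delta> \<Longrightarrow> loc_pow P (f P) n = lfrac P 0 1"
    using f unfolding nilradicalO_def by blast
  have "residue P (f P) = kfrac P 0 1" if P: "P \<in> dspec \<Delta>" for P
  proof -
    have pP: "is_prime_ideal P" using dspec_prime[OF P] .
    obtain a s where s: "s \<notin> P" and fP: "f P = lfrac P a s"
      using fO P unfolding sheafO_def loc_def by blast
    have "lfrac P (a ^ n) (s ^ n) = lfrac P 0 1"
      using nil[OF P] fP loc_pow_lfrac[OF pP s] by simp
    then obtain u where "u \<notin> P" "u * a ^ n = 0"
      using lfrac_eq_zero_iff[OF pP prime_notin_pow[OF pP s]] by blast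
    then have "a ^ n \<in> P"
      using prime_mult_in[OF pP] is_ideal_def prime_ideal_is_ideal[OF pP] by metis
    then have "a \<in> P" using prime_notin_pow[OF pP] by blast
    then show ?thesis using fP residue_lfrac_zero_iff[OF pP s] by simp
  qed
  then show ?thesis using fO by (simp add: kernel_phi_def phi_def)
qed

text \<open>Cover X by finitely many D(e_P); on each, f^N = (a_P/b_P)^N vanishes once N exceeds the
  nilpotency exponent of e_P a_P, because e_P is invertible there.\<close>
lemma kernel_sub_nilradical:
  assumes K: "keigher_ring \<Delta>" and f: "f \<in> kernel_phi \<Delta> (dspec \<Delta>)"
  shows "f \<in> nilradicalO \<Delta> (dspec \<Delta>)"
proof -
  define X where "X = dspec \<Delta>"
  have "\<forall>P\<in>X. \<exists>e a b n. e \<notin> P \<and> (e * a) ^ n = 0 \<and>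
           (\<forall>Q\<in>X. e \<notin> Q \<longrightarrow> b \<notin> Q \<and> f Q = lfrac Q a b)"
    unfolding X_def using kernel_locally_nilpotent[OF K f] by (rule ballI)
  then obtain e a b n where loc: "\<And>P. P \<in> X \<Longrightarrow> e P \<notin> P \<and> (e P * a P) ^ n P = 0 \<and>
       (\<forall>Q\<in>X. e P \<notin> Q \<longrightarrow> b P \<notin> Q \<and> f Q = lfrac Q (a P) (b P))"
    by metis
  have cover: "\<forall>Q\<in>dspec \<Delta>. \<not> e ` X \<subseteq> Q"
  proof
    fix Q assume "Q \<in> dspec \<Delta>"
    then have QX: "Q \<in> X" by (simp add: X_def)
    then have "e Q \<notin> Q" using loc by blast
    then show "\<not> e ` X \<subseteq> Q" using QX by blast
  qed
  obtain G where "G \<subseteq> e ` X" "finite G" and G: "\<forall>Q\<in>dspec \<Delta>. \<not> G \<subseteq> Q"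
    using dspec_quasi_compact[OF K cover] by blast
  then obtain F where F: "F \<subseteq> X" "finite F" "G = e ` F" by (meson finite_subset_image)
  define N where "N = (\<Sum>P\<in>F. n P)"
  have "loc_pow Q (f Q) N = lfrac Q 0 1" if Q: "Q \<in> X" for Q
  proof -
    have pQ: "is_prime_ideal Q" using Q dspec_prime unfolding X_def by blast
    have "\<not> e ` F \<subseteq> Q" using G Q F(3) unfolding X_def by blast
    then obtain P where P: "P \<in> F" and eP: "e P \<notin> Q" by blast
    have PX: "P \<in> X" using P F(1) by blast
    have bQ: "b P \<notin> Q" and fQ: "f Q = lfrac Q (a P) (b P)" using loc[OF PX] Q eP by auto
    have "n P \<le> N" unfolding N_def using P F(2) by (simp add: member_le_sum)
    then have "(e P * a P) ^ N = (e P * a P) ^ n P * (e P * a P) ^ (N - n P)"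
      by (simp flip: power_add)
    then have "e P ^ N * a P ^ N = 0" using loc[OF PX] by (simp add: power_mult_distrib)
    then have "lfrac Q (a P ^ N) (b P ^ N) = lfrac Q 0 1"
      using lfrac_eq_zero_iff[OF pQ prime_notin_pow[OF pQ bQ]] prime_notin_pow[OF pQ eP] by blast
    then show ?thesis using fQ loc_pow_lfrac[OF pQ bQ] by simp
  qed
  moreover have "f \<in> sheafO \<Delta> X" using f by (simp add: kernel_phi_def X_def)
  ultimately show ?thesis unfolding nilradicalO_def X_def by blast
qed

theorem proposition3p1:
  fixes \<Delta> :: "('a::comm_ring_1 \<Rightarrow> 'a) set"
  assumes "keigher_ring \<Delta>"
  shows "kernel_phi \<Delta> (dspec \<Delta>) = nilradicalO \<Delta> (dspec \<Delta>)"
  using kernel_sub_nilradical[OF assms] nilradical_sub_kernel by blast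

end
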